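(* Let $G(x)=\dfrac{1}{4\sqrt{2e^{-x}-1}}$ for real $x<\ln2$. Then: (1) $G$ is logarithmically absolutely monotonic on $(-\infty,\ln 2)$. (2) The sequences \[ (-1)^n\sum_{k=0}^{n}(-1)^kS(n,k)(2k-1)!!,\quad n\in\{0,1,2,\dots\}, \] and \[ (-1)^n\sum_{k=1}^{n}(-1)^kS(n,k)(2k-2)!!,\quad n\in\{1,2,\dots\}, \] are positive, increasing, and logarithmically convex.
   Context: A positive infinitely differentiable function $f$ on an interval $I$ is logarithmically absolutely monotonic if $[\ln f(x)]^{(n)}\ge0$ for all $n\in\mathbb{N}$ and $x\in I$. $S(n,k)$ are the Stirling numbers of the second kind, given by $\frac{(e^x-1)^k}{k!}=\sum_{n\ge k}S(n,k)\frac{x^n}{n!}$. Double factorials: $(2k-1)!!=1\cdot3\cdots(2k-1)$ for $k\ge1$, $(-1)!!=1$, and $(2j)!!=2^jj!$ with $0!!=1$. A sequence $(s_n)$ of positive numbers is logarithmically convex if $s_n^2\le s_{n-1}s_{n+1}$ for all $n$ at which both neighbours are defined. *)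

theory Defs
  imports "HOL-Analysis.Analysis" "HOL-Combinatorics.Stirling"
begin

definition log_abs_monotonic_on :: "(real \<Rightarrow> real) \<Rightarrow> real set \<Rightarrow> bool" where
  "log_abs_monotonic_on f I \<longleftrightarrow>
     (\<forall>x\<in>I. f x > 0) \<and>
     (\<forall>n. \<forall>x\<in>I. ((deriv ^^ n) f) differentiable (at x)) \<and>
     (\<forall>n\<ge>1. \<forall>x\<in>I. (deriv ^^ n) (\<lambda>y. ln (f y)) x \<ge> 0)"

text \<open>Odd double factorial: odd_dfact k = (2k-1)!!, with (-1)!! = 1.\<close>
definition odd_dfact :: "nat \<Rightarrow> nat" where
  "odd_dfact k = (\<Prod>i\<in>{1..k}. 2 * i - 1)"

text \<open>Even double factorial: even_dfact j = (2j)!! = 2^j j!, with 0!! = 1.\<close>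
definition even_dfact :: "nat \<Rightarrow> nat" where
  "even_dfact j = 2 ^ j * fact j"

definition G :: "real \<Rightarrow> real" where
  "G x = 1 / (4 * sqrt (2 * exp (- x) - 1))"

definition seqA :: "nat \<Rightarrow> real" where
  "seqA n = (-1) ^ n * (\<Sum>k=0..n. (-1) ^ k * real (Stirling n k) * real (odd_dfact k))"

definition seqB :: "nat \<Rightarrow> real" where
  "seqB n = (-1) ^ n * (\<Sum>k=1..n. (-1) ^ k * real (Stirling n k) * real (even_dfact (k - 1)))"

end

(* Both sequences are moment sequences. Write T c n = (-1)^n \<Sum>k (-1)^k S(n,k) c_k. The classical
   identity x^n = T (\<lambda>k. x^(k)) n, with x^(k) the rising factorial, gives T c n = \<Sum>m w_m x_m^n
   whenever c_k = \<Sum>m w_m x_m^(k). By the binomial series, (2k-1)!! = 2^k (1/2)^(k) is of this form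
   for the negative binomial weights with parameters a = q = 1/2 at the points x_m = m + 1/2. For the
   second sequence, T c (n+1) = T (\<lambda>k. c_(k+1) - k c_k) n, and the shifted coefficients are the
   rising moments of the geometric weights 2^-(m+1) at the points x_m = m. Moment sequences with
   nonnegative weights and points are positive and, by Cauchy-Schwarz, log-convex; together with
   s_0 <= s_1 log-convexity makes them increasing.

   For G, (ln G)' = 1/(2 - e^x). Differentiating c e^(ax) (2 - e^x)^b gives
   c a e^(ax) (2 - e^x)^b - c b e^((a+1)x) (2 - e^x)^(b-1), so finite sums of such terms with
   c, a >= 0 >= b stay of this kind under differentiation, and they are nonnegative. *)

theory Submission
  imports Defs
begin

definition stirling_transform :: "(nat \<Rightarrow> 'a::comm_ring_1) \<Rightarrow> nat \<Rightarrow> 'a" where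
  "stirling_transform c n = (-1) ^ n * (\<Sum>k\<le>n. (-1) ^ k * of_nat (Stirling n k) * c k)"

lemma stirling_transform_cmult:
  "stirling_transform (\<lambda>k. a * c k) n = a * stirling_transform c n"
  by (simp add: stirling_transform_def sum_distrib_left algebra_simps)

lemma stirling_transform_Suc:
  "stirling_transform c (Suc n) = stirling_transform (\<lambda>k. c (Suc k) - of_nat k * c k) n"
proof -
  define g where "g k = (-1) ^ k * of_nat k * of_nat (Stirling n k) * c k" for k
  have shift: "(\<Sum>k\<le>n. g (Suc k)) = (\<Sum>k\<le>n. g k)"
    using sum.atMost_Suc_shift[of g n] by (simp add: g_def)
  have "(\<Sum>k\<le>Suc n. (-1) ^ k * of_nat (Stirling (Suc n) k) * c k)
      = (\<Sum>k\<le>n. (-1) ^ Suc k * of_nat (Stirling (Suc n) (Suc k)) * c (Suc k))"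
    by (subst sum.atMost_Suc_shift) simp
  also have "\<dots> = (\<Sum>k\<le>n. g (Suc k) - (-1) ^ k * of_nat (Stirling n k) * c (Suc k))"
    \<comment> \<open>by the recurrence S(n+1,k+1) = (k+1) S(n,k+1) + S(n,k)\<close>
    by (rule sum.cong) (simp_all add: g_def algebra_simps)
  also have "\<dots> = - (\<Sum>k\<le>n. (-1) ^ k * of_nat (Stirling n k) * (c (Suc k) - of_nat k * c k))"
    unfolding sum_subtractf shift
    by (simp add: g_def algebra_simps sum_subtractf flip: sum_negf)
  finally show ?thesis
    by (simp add: stirling_transform_def)
qed

lemma stirling_transform_pochhammer: "stirling_transform (pochhammer x) n = x ^ n"
proof (induction n)
  case 0
  show ?case by (simp add: stirling_transform_def)
next
  case (Suc n)
  have "stirling_transform (pochhammer x) (Suc n) = stirling_transform (\<lambda>k. x * pochhammer x k) n"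
    by (simp add: stirling_transform_Suc pochhammer_rec' algebra_simps)
  then show ?case
    by (simp add: stirling_transform_cmult Suc.IH)
qed

lemma stirling_transform_sums:
  fixes w x :: "nat \<Rightarrow> 'a::real_normed_field"
  assumes "\<And>k. (\<lambda>m. w m * pochhammer (x m) k) sums c k"
  shows "(\<lambda>m. w m * x m ^ n) sums stirling_transform c n"
proof -
  define a :: "nat \<Rightarrow> 'a" where "a k = (-1) ^ n * (-1) ^ k * of_nat (Stirling n k)" for k
  have "(\<lambda>m. \<Sum>k\<le>n. a k * (w m * pochhammer (x m) k)) sums (\<Sum>k\<le>n. a k * c k)"
    by (intro sums_sum sums_mult assms)
  moreover have "(\<Sum>k\<le>n. a k * (w m * pochhammer (x m) k))
      = w m * stirling_transform (pochhammer (x m)) n" for m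
    by (simp add: a_def stirling_transform_def sum_distrib_left mult_ac)
  ultimately have "(\<lambda>m. w m * x m ^ n) sums (\<Sum>k\<le>n. a k * c k)"
    by (simp add: stirling_transform_pochhammer)
  then show ?thesis
    by (simp add: a_def stirling_transform_def sum_distrib_left mult.assoc)
qed

lemma pochhammer_power_div_fact_sums:
  fixes a q :: real
  assumes "\<bar>q\<bar> < 1"
  shows "(\<lambda>m. pochhammer a m * q ^ m / fact m) sums (1 - q) powr (- a)"
proof -
  have "(\<lambda>m. ((- a) gchoose m) * (- q) ^ m) sums (1 + - q) powr (- a)"
    using assms by (intro gen_binomial_real) simp
  moreover have "((- a) gchoose m) * (- q) ^ m = pochhammer a m * q ^ m / fact m" for m
    by (simp add: gbinomial_pochhammer power_mult_distrib[symmetric])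
  ultimately show ?thesis
    by simp
qed

definition neg_binomial_weight :: "real \<Rightarrow> real \<Rightarrow> nat \<Rightarrow> real" where
  "neg_binomial_weight a q m = (1 - q) powr a * pochhammer a m * q ^ m / fact m"

lemma neg_binomial_weight_nonneg: "0 < a \<Longrightarrow> 0 \<le> q \<Longrightarrow> 0 \<le> neg_binomial_weight a q m"
  by (simp add: neg_binomial_weight_def pochhammer_nonneg)

lemma neg_binomial_pochhammer_moments:
  fixes a q :: real
  assumes "\<bar>q\<bar> < 1"
  shows "(\<lambda>m. neg_binomial_weight a q m * pochhammer (a + of_nat m) k) sums (pochhammer a k / (1 - q) ^ k)"
proof -
  have q: "0 < 1 - q"
    using assms by simp
  have "pochhammer a m * pochhammer (a + of_nat m) k = pochhammer a k * pochhammer (a + of_nat k) m" for m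
    by (metis pochhammer_product' add.commute)
  then have "neg_binomial_weight a q m * pochhammer (a + of_nat m) k
      = (1 - q) powr a * pochhammer a k * (pochhammer (a + of_nat k) m * q ^ m / fact m)" for m
    by (simp add: neg_binomial_weight_def mult_ac)
  moreover have "(\<lambda>m. (1 - q) powr a * pochhammer a k * (pochhammer (a + of_nat k) m * q ^ m / fact m))
      sums ((1 - q) powr a * pochhammer a k * (1 - q) powr (- (a + of_nat k)))"
    by (intro sums_mult pochhammer_power_div_fact_sums assms)
  moreover have "(1 - q) powr a * (1 - q) powr (- (a + of_nat k)) = 1 / (1 - q) ^ k"
    using q by (simp add: powr_add[symmetric] powr_minus powr_realpow divide_inverse)
  ultimately show ?thesis
    by (simp add: mult_ac)
qed

lemma moment_sequence_pos:
  fixes w x :: "nat \<Rightarrow> real"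
  assumes "(\<lambda>m. w m * x m ^ n) sums s" "\<And>m. 0 \<le> w m" "\<And>m. 0 \<le> x m" "0 < w i" "0 < x i"
  shows "0 < s"
  using assms suminf_pos2[of "\<lambda>m. w m * x m ^ n" i] by (simp add: sums_iff)

lemma moment_sequence_log_convex:
  fixes w x s :: "nat \<Rightarrow> real"
  assumes s: "\<And>n. (\<lambda>m. w m * x m ^ n) sums s n" and w: "\<And>m. 0 \<le> w m" and x: "\<And>m. 0 \<le> x m"
  shows "(s (Suc n))\<^sup>2 \<le> s n * s (Suc (Suc n))"
proof (rule LIMSEQ_le)
  let ?S = "\<lambda>j N. \<Sum>m<N. w m * x m ^ j"
  show "(\<lambda>N. (?S (Suc n) N)\<^sup>2) \<longlonglongrightarrow> (s (Suc n))\<^sup>2"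
    using s[of "Suc n"] unfolding sums_def by (intro tendsto_intros)
  show "(\<lambda>N. ?S n N * ?S (Suc (Suc n)) N) \<longlonglongrightarrow> s n * s (Suc (Suc n))"
    using s[of n] s[of "Suc (Suc n)"] unfolding sums_def by (intro tendsto_intros)
  have sqrt_prod: "sqrt (w m * x m ^ n) * sqrt (w m * x m ^ Suc (Suc n)) = w m * x m ^ Suc n" for m
  proof -
    have "sqrt (w m * x m ^ n) * sqrt (w m * x m ^ Suc (Suc n)) = sqrt ((w m * x m ^ Suc n)\<^sup>2)"
      by (simp add: real_sqrt_mult[symmetric] power2_eq_square algebra_simps)
    then show ?thesis
      using w[of m] x[of m] by simp
  qed
  have sqrt_square: "(sqrt (w m * x m ^ j))\<^sup>2 = w m * x m ^ j" for m j
    using w[of m] x[of m] by simp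
  have "(?S (Suc n) N)\<^sup>2 \<le> ?S n N * ?S (Suc (Suc n)) N" for N
    using Cauchy_Schwarz_ineq_sum[of "\<lambda>m. sqrt (w m * x m ^ n)" "\<lambda>m. sqrt (w m * x m ^ Suc (Suc n))"]
    by (simp only: sqrt_prod sqrt_square)
  then show "\<exists>N0. \<forall>N\<ge>N0. (?S (Suc n) N)\<^sup>2 \<le> ?S n N * ?S (Suc (Suc n)) N"
    by blast
qed

lemma log_convex_imp_incseq:
  fixes s :: "nat \<Rightarrow> real"
  assumes pos: "\<And>n. 0 < s n" and "s 0 \<le> s 1"
    and log_convex: "\<And>n. (s (Suc n))\<^sup>2 \<le> s n * s (Suc (Suc n))"
  shows "incseq s"
proof (rule incseq_SucI)
  fix n
  show "s n \<le> s (Suc n)"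
  proof (induction n)
    case 0
    show ?case using \<open>s 0 \<le> s 1\<close> by simp
  next
    case (Suc n)
    have "s (Suc n) * s (Suc n) \<le> s n * s (Suc (Suc n))"
      using log_convex[of n] by (simp add: power2_eq_square)
    also have "\<dots> \<le> s (Suc n) * s (Suc (Suc n))"
      using Suc.IH pos[of "Suc (Suc n)"] by (intro mult_right_mono) auto
    finally show ?case
      using pos[of "Suc n"] by simp
  qed
qed

lemma odd_dfact_eq_pochhammer: "real (odd_dfact k) = 2 ^ k * pochhammer (1/2) k"
proof (induction k)
  case 0
  show ?case by (simp add: odd_dfact_def)
next
  case (Suc k)
  have "odd_dfact (Suc k) = (2 * k + 1) * odd_dfact k"
    by (simp add: odd_dfact_def prod.nat_ivl_Suc' algebra_simps)
  then show ?case
    using Suc.IH by (simp add: pochhammer_rec' algebra_simps)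
qed

lemma seqA_sums: "(\<lambda>m. neg_binomial_weight (1/2) (1/2) m * (1/2 + real m) ^ n) sums seqA n"
proof -
  have "(\<lambda>m. neg_binomial_weight (1/2) (1/2) m * pochhammer (1/2 + real m) k) sums real (odd_dfact k)" for k
    using neg_binomial_pochhammer_moments[of "1/2" "1/2" k]
    by (simp add: odd_dfact_eq_pochhammer power_one_over mult.commute)
  then have "(\<lambda>m. neg_binomial_weight (1/2) (1/2) m * (1/2 + real m) ^ n) sums
      stirling_transform (\<lambda>k. real (odd_dfact k)) n"
    by (rule stirling_transform_sums)
  then show ?thesis
    by (simp add: seqA_def stirling_transform_def atLeast0AtMost)
qed

lemma seqA_pos: "0 < seqA n"
  using neg_binomial_weight_nonneg[of "1/2" "1/2"]
  by (intro moment_sequence_pos[OF seqA_sums, where i=0]) (auto simp: neg_binomial_weight_def)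

lemma seqA_log_convex: "(seqA (Suc n))\<^sup>2 \<le> seqA n * seqA (Suc (Suc n))"
  by (rule moment_sequence_log_convex[OF seqA_sums]) (simp_all add: neg_binomial_weight_nonneg)

lemma incseq_seqA: "incseq seqA"
proof (rule log_convex_imp_incseq)
  show "seqA 0 \<le> seqA 1"
    by (simp add: seqA_def odd_dfact_def)
qed (rule seqA_pos seqA_log_convex)+

lemma geometric_pochhammer_moments:
  "(\<lambda>m. (1/2) ^ Suc m * pochhammer (real m) k) sums ((fact k * 2 ^ k + (if k = 0 then 1 else 0)) / 2)"
proof -
  define f where "f m = (1/2) ^ Suc m * pochhammer (real m) k" for m
  have shifted: "(\<lambda>j. f (Suc j)) = (\<lambda>j. neg_binomial_weight 1 (1/2) j * pochhammer (1 + real j) k / 2)"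
    by (simp add: fun_eq_iff f_def neg_binomial_weight_def pochhammer_fact[symmetric] add.commute)
  have "(\<lambda>j. f (Suc j)) sums (fact k * 2 ^ k / 2)"
    unfolding shifted using sums_divide[OF neg_binomial_pochhammer_moments[of "1/2" 1 k], of 2]
    by (simp add: pochhammer_fact power_one_over)
  then have "f sums (fact k * 2 ^ k / 2 + f 0)"
    by (simp only: sums_Suc_iff)
  then have "f sums ((fact k * 2 ^ k + (if k = 0 then 1 else 0)) / 2)"
    by (simp add: f_def pochhammer_0_left add_divide_distrib)
  then show ?thesis
    by (simp only: f_def[abs_def])
qed

lemma seqB_Suc_eq_stirling_transform:
  "seqB (Suc n) = stirling_transform (\<lambda>k. (fact k * 2 ^ k + (if k = 0 then 1 else 0)) / 2) n"
proof -
  have "seqB (Suc n) = stirling_transform (\<lambda>k. real (even_dfact (k - 1))) (Suc n)"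
    by (simp add: seqB_def stirling_transform_def atMost_atLeast0 sum.atLeast_Suc_atMost[of 0])
  also have "\<dots> = stirling_transform (\<lambda>k. real (even_dfact k) - real k * real (even_dfact (k - 1))) n"
    by (simp add: stirling_transform_Suc)
  also have "(\<lambda>k. real (even_dfact k) - real k * real (even_dfact (k - 1)))
      = (\<lambda>k. (fact k * 2 ^ k + (if k = 0 then 1 else 0)) / 2)"
  proof
    fix k
    show "real (even_dfact k) - real k * real (even_dfact (k - 1)) = (fact k * 2 ^ k + (if k = 0 then 1 else 0)) / 2"
      by (cases k) (simp_all add: even_dfact_def algebra_simps)
  qed
  finally show ?thesis .
qed

lemma seqB_Suc_sums: "(\<lambda>m. (1/2) ^ Suc m * real m ^ n) sums seqB (Suc n)"
  unfolding seqB_Suc_eq_stirling_transform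
  by (rule stirling_transform_sums) (rule geometric_pochhammer_moments)

lemma seqB_Suc_pos: "0 < seqB (Suc n)"
  by (rule moment_sequence_pos[OF seqB_Suc_sums, where i=1]) simp_all

lemma seqB_Suc_log_convex: "(seqB (Suc (Suc n)))\<^sup>2 \<le> seqB (Suc n) * seqB (Suc (Suc (Suc n)))"
  by (rule moment_sequence_log_convex[OF seqB_Suc_sums]) simp_all

lemma incseq_seqB_Suc: "incseq (\<lambda>n. seqB (Suc n))"
proof (rule log_convex_imp_incseq)
  show "seqB (Suc 0) \<le> seqB (Suc 1)"
    unfolding seqB_Suc_eq_stirling_transform by (simp add: stirling_transform_def even_dfact_def)
qed (rule seqB_Suc_pos seqB_Suc_log_convex)+

lemma exp_less_two: "x < ln 2 \<Longrightarrow> exp x < (2::real)"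
  using exp_less_mono[of x "ln 2"] by simp

fun eval_exp_terms :: "(real \<times> real \<times> real) list \<Rightarrow> real \<Rightarrow> real" where
  "eval_exp_terms [] x = 0"
| "eval_exp_terms ((c, a, b) # L) x = c * exp (a * x) * (2 - exp x) powr b + eval_exp_terms L x"

fun deriv_exp_terms :: "(real \<times> real \<times> real) list \<Rightarrow> (real \<times> real \<times> real) list" where
  "deriv_exp_terms [] = []"
| "deriv_exp_terms ((c, a, b) # L) = (c * a, a, b) # (- (c * b), a + 1, b - 1) # deriv_exp_terms L"

definition nonneg_exp_terms :: "(real \<times> real \<times> real) list \<Rightarrow> bool" where
  "nonneg_exp_terms L \<longleftrightarrow> (\<forall>(c, a, b) \<in> set L. 0 \<le> c \<and> 0 \<le> a \<and> b \<le> 0)"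

lemma has_real_derivative_eval_exp_terms:
  assumes "x < ln 2"
  shows "(eval_exp_terms L has_real_derivative eval_exp_terms (deriv_exp_terms L) x) (at x)"
proof (induction L)
  case Nil
  have "eval_exp_terms [] = (\<lambda>x. 0)"
    by (rule ext) simp
  then show ?case
    by simp
next
  case (Cons t L)
  obtain c a b where t: "t = (c, a, b)"
    by (cases t) auto
  have "0 < 2 - exp x" and "exp ((a + 1) * x) = exp (a * x) * exp x"
    using exp_less_two[OF assms] by (simp_all add: distrib_right exp_add)
  then have "((\<lambda>x. c * exp (a * x) * (2 - exp x) powr b) has_real_derivative
      c * a * exp (a * x) * (2 - exp x) powr b - c * b * exp ((a + 1) * x) * (2 - exp x) powr (b - 1)) (at x)"
    by (auto intro!: derivative_eq_intros simp: algebra_simps)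
  from DERIV_add[OF this Cons.IH] show ?case
    by (simp add: t algebra_simps)
qed

lemma has_real_derivative_if_eq_eval_exp_terms:
  assumes "\<And>y. y < ln 2 \<Longrightarrow> f y = eval_exp_terms L y" and "x < ln 2"
  shows "(f has_real_derivative eval_exp_terms (deriv_exp_terms L) x) (at x)"
  by (rule has_field_derivative_transform_within_open[OF has_real_derivative_eval_exp_terms[OF assms(2)],
        where S="{..<ln 2}"])
     (use assms in auto)

lemma higher_deriv_eval_exp_terms:
  assumes "\<And>y. y < ln 2 \<Longrightarrow> f y = eval_exp_terms L y" and "x < ln 2"
  shows "(deriv ^^ n) f x = eval_exp_terms ((deriv_exp_terms ^^ n) L) x"
  using assms(2)
proof (induction n arbitrary: x)
  case 0
  then show ?case
    using assms(1) by simp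
next
  case (Suc n)
  then show ?case
    by (simp add: DERIV_imp_deriv has_real_derivative_if_eq_eval_exp_terms)
qed

lemma higher_deriv_differentiable_if_eq_eval_exp_terms:
  assumes "\<And>y. y < ln 2 \<Longrightarrow> f y = eval_exp_terms L y" and "x < ln 2"
  shows "(deriv ^^ n) f differentiable (at x)"
  using has_real_derivative_if_eq_eval_exp_terms[OF higher_deriv_eval_exp_terms[OF assms(1)] assms(2)]
  by (rule differentiableI[OF has_field_derivative_imp_has_derivative])

lemma nonneg_exp_terms_deriv: "nonneg_exp_terms L \<Longrightarrow> nonneg_exp_terms (deriv_exp_terms L)"
  by (induction L rule: deriv_exp_terms.induct) (auto simp: nonneg_exp_terms_def mult_nonneg_nonpos)

lemma nonneg_exp_terms_funpow_deriv: "nonneg_exp_terms L \<Longrightarrow> nonneg_exp_terms ((deriv_exp_terms ^^ n) L)"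
  by (induction n) (simp_all add: nonneg_exp_terms_deriv)

lemma eval_exp_terms_nonneg: "nonneg_exp_terms L \<Longrightarrow> 0 \<le> eval_exp_terms L x"
  by (induction L rule: deriv_exp_terms.induct) (auto simp: nonneg_exp_terms_def)

lemma G_eq_eval_exp_terms:
  assumes "x < ln 2"
  shows "G x = eval_exp_terms [(1/4, 1/2, -1/2)] x"
proof -
  have pos: "0 < 2 - exp x"
    using exp_less_two[OF assms] by simp
  have "2 * exp (- x) - 1 = exp (- x) * (2 - exp x)"
    by (simp add: exp_minus field_simps)
  moreover have "sqrt (exp (- x)) = inverse (exp (1/2 * x))"
  proof -
    have "exp (- x) = (exp (- x / 2))\<^sup>2"
      by (simp add: power2_eq_square flip: exp_add)
    then show ?thesis
      by (simp add: exp_minus)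
  qed
  ultimately have "G x = 1 / (4 * (inverse (exp (1/2 * x)) * sqrt (2 - exp x)))"
    by (simp only: G_def real_sqrt_mult)
  also have "\<dots> = 1/4 * exp (1/2 * x) * inverse (sqrt (2 - exp x))"
    by (simp add: field_simps)
  also have "inverse (sqrt (2 - exp x)) = (2 - exp x) powr (-1/2)"
  proof -
    have "(2 - exp x) powr (-1/2) = inverse ((2 - exp x) powr (1/2))"
      using powr_minus[of "2 - exp x" "1/2"] by (simp only: minus_divide_left)
    then show ?thesis
      using pos by (simp only: powr_half_sqrt less_imp_le)
  qed
  finally show ?thesis
    by (simp only: eval_exp_terms.simps add_0_right)
qed

lemma deriv_ln_G:
  assumes "x < ln 2"
  shows "deriv (\<lambda>y. ln (G y)) x = eval_exp_terms [(1, 0, -1)] x"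
proof -
  have ln_G: "- ln 4 - ln (2 * exp (- y) - 1) / 2 = ln (G y)" if "y < ln 2" for y
  proof -
    have pos: "0 < 2 * exp (- y) - 1"
      using exp_less_two[OF that] by (simp add: exp_minus field_simps)
    then have "ln (G y) = - ln (4 * sqrt (2 * exp (- y) - 1))"
      by (simp add: G_def ln_div)
    also have "\<dots> = - ln 4 - ln (2 * exp (- y) - 1) / 2"
      using pos by (simp add: ln_mult ln_sqrt)
    finally show ?thesis
      by simp
  qed
  have "0 < 2 * exp (- x) - 1" "0 < 2 - exp x"
    using exp_less_two[OF assms] by (simp_all add: exp_minus field_simps)
  then have "((\<lambda>y. - ln 4 - ln (2 * exp (- y) - 1) / 2) has_real_derivative eval_exp_terms [(1, 0, -1)] x) (at x)"
    by (auto intro!: derivative_eq_intros simp: exp_minus field_simps)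
  then have "((\<lambda>y. ln (G y)) has_real_derivative eval_exp_terms [(1, 0, -1)] x) (at x)"
    by (rule has_field_derivative_transform_within_open[where S="{..<ln 2}"]) (use assms ln_G in auto)
  then show ?thesis
    by (rule DERIV_imp_deriv)
qed

lemma log_abs_monotonic_on_G: "log_abs_monotonic_on G {..<ln 2}"
  unfolding log_abs_monotonic_on_def
proof (intro conjI ballI allI impI)
  fix x :: real
  assume "x \<in> {..<ln 2}"
  then have x: "x < ln 2"
    by simp
  have "0 < 2 * exp (- x) - 1"
    using exp_less_two[OF x] by (simp add: exp_minus field_simps)
  then show "0 < G x"
    by (simp add: G_def)
  show "(deriv ^^ n) G differentiable (at x)" for n
    by (rule higher_deriv_differentiable_if_eq_eval_exp_terms[where L="[(1/4, 1/2, -1/2)]", OF _ x])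
       (rule G_eq_eval_exp_terms)
  fix n :: nat
  assume "1 \<le> n"
  then obtain m where n: "n = Suc m"
    by (cases n) auto
  have "(deriv ^^ n) (\<lambda>y. ln (G y)) x = (deriv ^^ m) (deriv (\<lambda>y. ln (G y))) x"
    by (simp only: n funpow_Suc_right comp_def)
  also have "\<dots> = eval_exp_terms ((deriv_exp_terms ^^ m) [(1, 0, -1)]) x"
    using higher_deriv_eval_exp_terms[OF deriv_ln_G x] .
  also have "\<dots> \<ge> 0"
    by (intro eval_exp_terms_nonneg nonneg_exp_terms_funpow_deriv) (simp add: nonneg_exp_terms_def)
  finally show "0 \<le> (deriv ^^ n) (\<lambda>y. ln (G y)) x" .
qed

theorem theorem6p2:
  shows "log_abs_monotonic_on G {..<ln 2}
    \<and> (\<forall>n. seqA n > 0)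
    \<and> (\<forall>n. seqA n \<le> seqA (Suc n))
    \<and> (\<forall>n\<ge>1. (seqA n)\<^sup>2 \<le> seqA (n - 1) * seqA (Suc n))
    \<and> (\<forall>n\<ge>1. seqB n > 0)
    \<and> (\<forall>n\<ge>1. seqB n \<le> seqB (Suc n))
    \<and> (\<forall>n\<ge>2. (seqB n)\<^sup>2 \<le> seqB (n - 1) * seqB (Suc n))"
proof (intro conjI allI impI)
  fix n :: nat
  show "seqA n \<le> seqA (Suc n)"
    using incseq_seqA by (rule incseq_SucD)
  assume "1 \<le> n"
  then obtain m where n: "n = Suc m"
    by (cases n) auto
  show "(seqA n)\<^sup>2 \<le> seqA (n - 1) * seqA (Suc n)"
    using seqA_log_convex[of m] by (simp add: n)
  show "0 < seqB n"
    using seqB_Suc_pos[of m] by (simp add: n)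
  show "seqB n \<le> seqB (Suc n)"
    using incseq_SucD[OF incseq_seqB_Suc, of m] by (simp add: n)
next
  fix n :: nat
  assume "2 \<le> n"
  then obtain m where n: "n = Suc (Suc m)"
    by (metis add_2_eq_Suc le_Suc_ex)
  show "(seqB n)\<^sup>2 \<le> seqB (n - 1) * seqB (Suc n)"
    using seqB_Suc_log_convex[of m] by (simp add: n)
qed (simp_all add: log_abs_monotonic_on_G seqA_pos)

end
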